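(* Let $\Gamma$ be a connected connected-homogeneous locally-finite bipartite graph with bipartition $X\cup Y$. Let $x\in X$ and $y\in Y$ be adjacent, and define $A=\Gamma(x)\setminus\{y\}$ and $B=\Gamma(y)\setminus\{x\}$. Then $\Omega=\langle A\cup B\rangle$ (with bipartition $A\cup B$) is a finite homogeneous bipartite graph, and therefore is one of: a null bipartite graph, a complete bipartite graph, the complement of a perfect matching, or a perfect matching.
   Context: $\Gamma(v)$ denotes the set of neighbours of $v$ and $\langle S\rangle$ the induced subgraph on $S$. A bipartite graph with given bipartition $X\cup Y$ is a homogeneous bipartite graph if every isomorphism between finite induced subgraphs mapping vertices of $X$ to vertices of $X$ and vertices of $Y$ to vertices of $Y$ extends to an automorphism preserving $X$ and $Y$ setwise; it is a connected-homogeneous bipartite graph if this holds for isomorphisms between finite connected induced subgraphs. A null bipartite graph has no edges. The complement of a perfect matching on $2n$ vertices has parts $X',Y'$ of size $n$, a bijection $\eta:X'\to Y'$, and $x'\sim y'$ iff $y'\ne\eta(x')$. *)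

theory Defs
  imports Main
begin

definition bip_graph :: "'a set \<Rightarrow> 'a set \<Rightarrow> 'a set \<Rightarrow> ('a \<Rightarrow> 'a \<Rightarrow> bool) \<Rightarrow> bool" where
  "bip_graph V X Y E \<longleftrightarrow>
     (\<forall>u v. E u v \<longrightarrow> E v u) \<and> (\<forall>u v. E u v \<longrightarrow> u \<in> V \<and> v \<in> V) \<and>
     X \<inter> Y = {} \<and> X \<union> Y = V \<and>
     (\<forall>u v. E u v \<longrightarrow> (u \<in> X \<and> v \<in> Y) \<or> (u \<in> Y \<and> v \<in> X))"

definition nbrs :: "('a \<Rightarrow> 'a \<Rightarrow> bool) \<Rightarrow> 'a \<Rightarrow> 'a set" where
  "nbrs E v = {u. E v u}"

definition induced :: "('a \<Rightarrow> 'a \<Rightarrow> bool) \<Rightarrow> 'a set \<Rightarrow> 'a \<Rightarrow> 'a \<Rightarrow> bool" where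
  "induced E S u v \<longleftrightarrow> u \<in> S \<and> v \<in> S \<and> E u v"

definition connected_on :: "('a \<Rightarrow> 'a \<Rightarrow> bool) \<Rightarrow> 'a set \<Rightarrow> bool" where
  "connected_on E S \<longleftrightarrow> S \<noteq> {} \<and> (\<forall>u\<in>S. \<forall>v\<in>S. (induced E S)\<^sup>*\<^sup>* u v)"

definition locally_finite :: "'a set \<Rightarrow> ('a \<Rightarrow> 'a \<Rightarrow> bool) \<Rightarrow> bool" where
  "locally_finite V E \<longleftrightarrow> (\<forall>v\<in>V. finite (nbrs E v))"

definition bip_iso ::
  "'a set \<Rightarrow> 'a set \<Rightarrow> ('a \<Rightarrow> 'a \<Rightarrow> bool) \<Rightarrow> 'a set \<Rightarrow> 'a set \<Rightarrow> ('a \<Rightarrow> 'a) \<Rightarrow> bool" where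
  "bip_iso X Y E S T f \<longleftrightarrow>
     bij_betw f S T \<and> (\<forall>u\<in>S. \<forall>v\<in>S. E u v \<longleftrightarrow> E (f u) (f v)) \<and>
     f ` (S \<inter> X) \<subseteq> X \<and> f ` (S \<inter> Y) \<subseteq> Y"

definition bip_aut :: "'a set \<Rightarrow> 'a set \<Rightarrow> 'a set \<Rightarrow> ('a \<Rightarrow> 'a \<Rightarrow> bool) \<Rightarrow> ('a \<Rightarrow> 'a) \<Rightarrow> bool" where
  "bip_aut V X Y E g \<longleftrightarrow>
     bij_betw g V V \<and> (\<forall>u\<in>V. \<forall>v\<in>V. E u v \<longleftrightarrow> E (g u) (g v)) \<and> g ` X = X \<and> g ` Y = Y"

definition homogeneous_bip :: "'a set \<Rightarrow> 'a set \<Rightarrow> 'a set \<Rightarrow> ('a \<Rightarrow> 'a \<Rightarrow> bool) \<Rightarrow> bool" where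
  "homogeneous_bip V X Y E \<longleftrightarrow> bip_graph V X Y E \<and>
     (\<forall>S T f. S \<subseteq> V \<and> T \<subseteq> V \<and> finite S \<and> bip_iso X Y E S T f \<longrightarrow>
        (\<exists>g. bip_aut V X Y E g \<and> (\<forall>v\<in>S. g v = f v)))"

definition conn_homogeneous_bip :: "'a set \<Rightarrow> 'a set \<Rightarrow> 'a set \<Rightarrow> ('a \<Rightarrow> 'a \<Rightarrow> bool) \<Rightarrow> bool" where
  "conn_homogeneous_bip V X Y E \<longleftrightarrow> bip_graph V X Y E \<and>
     (\<forall>S T f. S \<subseteq> V \<and> T \<subseteq> V \<and> finite S \<and> connected_on E S \<and> connected_on E T \<and>
        bip_iso X Y E S T f \<longrightarrow>
        (\<exists>g. bip_aut V X Y E g \<and> (\<forall>v\<in>S. g v = f v)))"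

definition null_bip :: "'a set \<Rightarrow> 'a set \<Rightarrow> ('a \<Rightarrow> 'a \<Rightarrow> bool) \<Rightarrow> bool" where
  "null_bip X Y E \<longleftrightarrow> (\<forall>x\<in>X. \<forall>y\<in>Y. \<not> E x y)"

definition complete_bip :: "'a set \<Rightarrow> 'a set \<Rightarrow> ('a \<Rightarrow> 'a \<Rightarrow> bool) \<Rightarrow> bool" where
  "complete_bip X Y E \<longleftrightarrow> (\<forall>x\<in>X. \<forall>y\<in>Y. E x y)"

definition perfect_matching_bip :: "'a set \<Rightarrow> 'a set \<Rightarrow> ('a \<Rightarrow> 'a \<Rightarrow> bool) \<Rightarrow> bool" where
  "perfect_matching_bip X Y E \<longleftrightarrow>
     (\<exists>\<eta>. bij_betw \<eta> X Y \<and> (\<forall>x\<in>X. \<forall>y\<in>Y. E x y \<longleftrightarrow> y = \<eta> x))"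

definition co_perfect_matching_bip :: "'a set \<Rightarrow> 'a set \<Rightarrow> ('a \<Rightarrow> 'a \<Rightarrow> bool) \<Rightarrow> bool" where
  "co_perfect_matching_bip X Y E \<longleftrightarrow>
     (\<exists>\<eta>. bij_betw \<eta> X Y \<and> (\<forall>x\<in>X. \<forall>y\<in>Y. E x y \<longleftrightarrow> y \<noteq> \<eta> x))"

end

theory Submission
  imports Defs "HOL-Combinatorics.Transposition"
begin

text \<open>Every vertex of \<open>A\<close> is adjacent to \<open>x\<close> but not to \<open>y\<close>, and every vertex of \<open>B\<close> to \<open>y\<close>
  but not to \<open>x\<close>. Hence an isomorphism between finite induced subgraphs of \<open>\<Omega>\<close>, extended by
  fixing \<open>x\<close> and \<open>y\<close>, is an isomorphism between connected induced subgraphs of \<open>\<Gamma>\<close>. Its extension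
  to an automorphism fixes \<open>x\<close> and \<open>y\<close>, so it stabilises \<open>A\<close> and \<open>B\<close> and restricts to \<open>\<Omega>\<close>.

  In a finite homogeneous bipartite graph every injection inside one part extends to an
  automorphism. So all vertices of \<open>X\<close> have the same degree \<open>d\<close>, all pairs of distinct vertices of
  \<open>X\<close> have the same number of common neighbours, and (swapping two vertices of \<open>Y\<close>) exchanging a
  neighbour of some vertex for a non-neighbour gives the neighbourhood of another vertex. If
  \<open>0 < d < |Y|\<close>, one exchange shows that distinct vertices have \<open>d - 1\<close> common neighbours, and if
  also \<open>2 \<le> d \<le> |Y| - 2\<close>, two exchanges give a pair with only \<open>d - 2\<close>. Thus \<open>d\<close> is \<open>0\<close>, \<open>1\<close>,
  \<open>|Y| - 1\<close> or \<open>|Y|\<close>, giving the four families.\<close>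

lemma bip_graph_commute: "bip_graph V X Y E \<Longrightarrow> bip_graph V Y X E"
  unfolding bip_graph_def by blast

lemma bip_aut_commute: "bip_aut V X Y E g \<Longrightarrow> bip_aut V Y X E g"
  unfolding bip_aut_def by blast

lemma homogeneous_bipD:
  assumes "homogeneous_bip V X Y E" "S \<subseteq> V" "T \<subseteq> V" "finite S" "bip_iso X Y E S T f"
  shows "\<exists>g. bip_aut V X Y E g \<and> (\<forall>v\<in>S. g v = f v)"
  using assms unfolding homogeneous_bip_def by blast

lemma homogeneous_bip_commute:
  assumes "homogeneous_bip V X Y E"
  shows "homogeneous_bip V Y X E"
  unfolding homogeneous_bip_def
proof (intro conjI allI impI)
  show "bip_graph V Y X E"
    using assms bip_graph_commute by (auto simp: homogeneous_bip_def)
next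
  fix S T f assume "S \<subseteq> V \<and> T \<subseteq> V \<and> finite S \<and> bip_iso Y X E S T f"
  then have "S \<subseteq> V" "T \<subseteq> V" "finite S" "bip_iso X Y E S T f"
    unfolding bip_iso_def by auto
  then obtain g where "bip_aut V X Y E g" "\<forall>v\<in>S. g v = f v"
    using homogeneous_bipD[OF assms] by blast
  then show "\<exists>g. bip_aut V Y X E g \<and> (\<forall>v\<in>S. g v = f v)"
    using bip_aut_commute by blast
qed

lemma bip_graph_part_independent: "bip_graph V X Y E \<Longrightarrow> u \<in> X \<Longrightarrow> v \<in> X \<Longrightarrow> \<not> E u v"
  unfolding bip_graph_def by (meson disjoint_iff)

lemma bip_graph_nbrs_subset: "bip_graph V X Y E \<Longrightarrow> a \<in> X \<Longrightarrow> nbrs E a \<subseteq> Y"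
  unfolding bip_graph_def nbrs_def by blast

lemma bip_aut_nbrs:
  assumes "bip_graph V X Y E" "bip_aut V X Y E g" "a \<in> V"
  shows "nbrs E (g a) = g ` nbrs E a"
proof -
  have gV: "g ` V = V" and E_iff: "\<And>u v. u \<in> V \<Longrightarrow> v \<in> V \<Longrightarrow> E u v \<longleftrightarrow> E (g u) (g v)"
    using assms(2) by (auto simp: bip_aut_def bij_betw_def)
  have inV: "\<And>u v. E u v \<Longrightarrow> v \<in> V" using assms(1) by (auto simp: bip_graph_def)
  show ?thesis
  proof (intro equalityI subsetI)
    fix c assume "c \<in> nbrs E (g a)"
    then have "E (g a) c" by (simp add: nbrs_def)
    moreover obtain b where "b \<in> V" "c = g b" using inV[OF \<open>E (g a) c\<close>] gV by blast
    ultimately show "c \<in> g ` nbrs E a" using E_iff[OF assms(3)] by (auto simp: nbrs_def)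
  next
    fix c assume "c \<in> g ` nbrs E a"
    then obtain b where "E a b" "c = g b" by (auto simp: nbrs_def)
    then show "c \<in> nbrs E (g a)" using E_iff[OF assms(3)] inV by (auto simp: nbrs_def)
  qed
qed

lemma bip_aut_card_common_nbrs:
  assumes "bip_graph V X Y E" "bip_aut V X Y E g" "a \<in> V" "a' \<in> V"
  shows "card (nbrs E (g a) \<inter> nbrs E (g a')) = card (nbrs E a \<inter> nbrs E a')"
proof -
  have inj: "inj_on g V" using assms(2) by (simp add: bip_aut_def bij_betw_def)
  have "nbrs E a \<subseteq> V" "nbrs E a' \<subseteq> V" using assms(1) by (auto simp: bip_graph_def nbrs_def)
  then have "nbrs E (g a) \<inter> nbrs E (g a') = g ` (nbrs E a \<inter> nbrs E a')"
    using bip_aut_nbrs[OF assms(1,2)] assms(3,4) inj_on_image_Int[OF inj] by simp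
  moreover have "inj_on g (nbrs E a \<inter> nbrs E a')"
    using inj \<open>nbrs E a \<subseteq> V\<close> by (blast intro: inj_on_subset)
  ultimately show ?thesis by (simp add: card_image)
qed

text \<open>A map between subsets of one part has no edges to preserve, so it is a partial isomorphism.\<close>
lemma homogeneous_bip_extend_within_part:
  assumes hom: "homogeneous_bip V X Y E"
    and "finite S" "S \<subseteq> X" "f ` S \<subseteq> X" "inj_on f S"
  shows "\<exists>g. bip_aut V X Y E g \<and> (\<forall>v\<in>S. g v = f v)"
proof -
  have bg: "bip_graph V X Y E" using hom by (simp add: homogeneous_bip_def)
  have XV: "X \<subseteq> V" and XY: "X \<inter> Y = {}" using bg by (auto simp: bip_graph_def)
  have "\<forall>u\<in>S. \<forall>v\<in>S. E u v \<longleftrightarrow> E (f u) (f v)"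
    using assms(3,4) bip_graph_part_independent[OF bg] by blast
  then have "bip_iso X Y E S (f ` S) f"
    using assms(3-5) XY by (auto simp: bip_iso_def inj_on_imp_bij_betw)
  moreover have "S \<subseteq> V" "f ` S \<subseteq> V" using assms(3,4) XV by auto
  ultimately show ?thesis
    using homogeneous_bipD[OF hom] \<open>finite S\<close> by blast
qed

lemma homogeneous_bip_card_common_nbrs:
  assumes hom: "homogeneous_bip V X Y E"
    and "a \<in> X" "a' \<in> X" "a1 \<in> X" "a2 \<in> X" and "a = a' \<longleftrightarrow> a1 = a2"
  shows "card (nbrs E a1 \<inter> nbrs E a2) = card (nbrs E a \<inter> nbrs E a')"
proof -
  have bg: "bip_graph V X Y E" using hom by (simp add: homogeneous_bip_def)
  let ?f = "\<lambda>v. if v = a then a1 else a2"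
  have "inj_on ?f {a, a'}" using assms(6) by (auto simp: inj_on_def)
  then obtain g where g: "bip_aut V X Y E g" "g a = a1" "g a' = a2"
    using homogeneous_bip_extend_within_part[OF hom, of "{a, a'}" ?f] assms by auto
  have "a \<in> V" "a' \<in> V" using bg assms(2,3) by (auto simp: bip_graph_def)
  then show ?thesis using bip_aut_card_common_nbrs[OF bg g(1)] g(2,3) by metis
qed

lemma homogeneous_bip_card_nbrs:
  "homogeneous_bip V X Y E \<Longrightarrow> a \<in> X \<Longrightarrow> a' \<in> X \<Longrightarrow> card (nbrs E a') = card (nbrs E a)"
  using homogeneous_bip_card_common_nbrs[of V X Y E a a a' a'] by simp

lemma transpose_image_exchange:
  "p \<in> D \<Longrightarrow> r \<notin> D \<Longrightarrow> transpose p r ` D = insert r (D - {p})"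
  by (auto simp: in_transpose_image_iff transpose_def)

lemma homogeneous_bip_exchange:
  assumes hom: "homogeneous_bip V X Y E" and "finite Y"
    and "a \<in> X" "p \<in> nbrs E a" "r \<in> Y" "r \<notin> nbrs E a"
  shows "\<exists>a'\<in>X. nbrs E a' = insert r (nbrs E a - {p})"
proof -
  have bg: "bip_graph V X Y E" using hom by (simp add: homogeneous_bip_def)
  have NY: "nbrs E a \<subseteq> Y" using bip_graph_nbrs_subset[OF bg assms(3)] .
  then have "transpose p r ` Y = Y" using assms(4,5) by (simp add: subsetD)
  then obtain g where g: "bip_aut V Y X E g" "\<forall>v\<in>Y. g v = transpose p r v"
    using homogeneous_bip_extend_within_part[of V Y X E Y "transpose p r"]
      homogeneous_bip_commute[OF hom] \<open>finite Y\<close> by auto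
  have aut: "bip_aut V X Y E g" using bip_aut_commute[OF g(1)] .
  have "a \<in> V" using bg assms(3) by (auto simp: bip_graph_def)
  moreover have "g ` nbrs E a = transpose p r ` nbrs E a"
    using g(2) NY by (intro image_cong) auto
  ultimately have "nbrs E (g a) = transpose p r ` nbrs E a"
    using bip_aut_nbrs[OF bg aut] by simp
  moreover have "g a \<in> X" using aut assms(3) by (auto simp: bip_aut_def)
  ultimately show ?thesis using transpose_image_exchange assms(4,6) by metis
qed

context
  fixes V X Y :: "'a set" and E :: "'a \<Rightarrow> 'a \<Rightarrow> bool"
  assumes hom: "homogeneous_bip V X Y E" and finite_Y: "finite Y"
begin

private lemma nbrs_subset_Y: "a \<in> X \<Longrightarrow> nbrs E a \<subseteq> Y"
  using bip_graph_nbrs_subset[of V X Y E a] hom by (simp add: homogeneous_bip_def)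

private lemma finite_nbrs: "a \<in> X \<Longrightarrow> finite (nbrs E a)"
  using nbrs_subset_Y finite_Y by (rule finite_subset)

lemma homogeneous_bip_card_common_nbrs_eq:
  assumes "a \<in> X" "0 < card (nbrs E a)" "card (nbrs E a) < card Y"
    and "a1 \<in> X" "a2 \<in> X" "a1 \<noteq> a2"
  shows "card (nbrs E a1 \<inter> nbrs E a2) = card (nbrs E a) - 1"
proof -
  obtain p where p: "p \<in> nbrs E a" using assms(2) by (auto simp: card_gt_0_iff)
  have "\<not> Y \<subseteq> nbrs E a"
    using assms(3) card_mono[OF finite_nbrs[OF assms(1)], of Y] by linarith
  then obtain r where r: "r \<in> Y" "r \<notin> nbrs E a" by blast
  obtain a' where a': "a' \<in> X" "nbrs E a' = insert r (nbrs E a - {p})"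
    using homogeneous_bip_exchange[OF hom finite_Y assms(1) p r] by blast
  have "a \<noteq> a'" using a'(2) r(2) by auto
  moreover have "nbrs E a \<inter> nbrs E a' = nbrs E a - {p}" using a'(2) r(2) by auto
  ultimately show ?thesis
    using homogeneous_bip_card_common_nbrs[OF hom assms(1) a'(1) assms(4,5)] assms(6) p
    by (simp add: finite_nbrs[OF assms(1)])
qed

lemma homogeneous_bip_inj_on_nbrs:
  assumes "a \<in> X" "0 < card (nbrs E a)" "card (nbrs E a) < card Y"
  shows "inj_on (nbrs E) X"
proof (rule inj_onI, rule ccontr)
  fix a1 a2 assume a12: "a1 \<in> X" "a2 \<in> X" "nbrs E a1 = nbrs E a2" "a1 \<noteq> a2"
  then have "card (nbrs E a1 \<inter> nbrs E a2) = card (nbrs E a) - 1"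
    using homogeneous_bip_card_common_nbrs_eq[OF assms] by blast
  moreover have "card (nbrs E a1 \<inter> nbrs E a2) = card (nbrs E a)"
    using a12(3) homogeneous_bip_card_nbrs[OF hom assms(1) a12(1)] by simp
  ultimately show False using assms(2) by linarith
qed

lemma homogeneous_bip_degree_extreme:
  assumes "a \<in> X" "0 < card (nbrs E a)" "card (nbrs E a) < card Y"
  shows "card (nbrs E a) = 1 \<or> card (nbrs E a) = card Y - 1"
proof (rule ccontr)
  let ?N = "nbrs E a"
  assume "\<not> ?thesis"
  then have "\<not> card ?N \<le> Suc 0" "\<not> card (Y - ?N) \<le> Suc 0"
    using assms nbrs_subset_Y[OF assms(1)] finite_nbrs[OF assms(1)] by (auto simp: card_Diff_subset)
  then obtain p q r s where pq: "p \<in> ?N" "q \<in> ?N" "p \<noteq> q"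
    and rs: "r \<in> Y - ?N" "s \<in> Y - ?N" "r \<noteq> s"
    using finite_nbrs[OF assms(1)] finite_Y by (auto simp: card_le_Suc0_iff_eq)
  obtain a1 where a1: "a1 \<in> X" "nbrs E a1 = insert r (?N - {p})"
    using homogeneous_bip_exchange[OF hom finite_Y assms(1) pq(1)] rs(1) by blast
  have "q \<in> nbrs E a1" "s \<notin> nbrs E a1" using a1(2) pq rs by auto
  then obtain a2 where a2: "a2 \<in> X" "nbrs E a2 = insert s (nbrs E a1 - {q})"
    using homogeneous_bip_exchange[OF hom finite_Y a1(1)] rs(2) by blast
  have "a \<noteq> a2" using a1(2) a2(2) rs by auto
  moreover have "?N \<inter> nbrs E a2 = ?N - {p, q}" using a1(2) a2(2) rs by auto
  ultimately have "card (?N - {p, q}) = card ?N - 1"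
    using homogeneous_bip_card_common_nbrs_eq[OF assms assms(1) a2(1)] by simp
  moreover have "card (?N - {p, q}) = card ?N - 2"
    using pq finite_nbrs[OF assms(1)] by (simp add: card_Diff_subset)
  ultimately show False using \<open>\<not> card ?N \<le> Suc 0\<close> by linarith
qed

lemma homogeneous_bip_perfect_matching:
  assumes "a \<in> X" "card (nbrs E a) = 1" "1 < card Y"
  shows "perfect_matching_bip X Y E"
proof -
  define \<eta> where "\<eta> b = the_elem (nbrs E b)" for b
  have N: "nbrs E b = {\<eta> b}" if "b \<in> X" for b
    using homogeneous_bip_card_nbrs[OF hom assms(1) that] assms(2)
    by (auto simp: \<eta>_def card_1_singleton_iff)
  have "inj_on \<eta> X"
    using homogeneous_bip_inj_on_nbrs[OF assms(1)] assms(2,3) N by (auto simp: inj_on_def)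
  moreover have "\<eta> ` X = Y"
  proof
    show "\<eta> ` X \<subseteq> Y" using N nbrs_subset_Y by blast
    show "Y \<subseteq> \<eta> ` X"
    proof
      fix c assume "c \<in> Y"
      show "c \<in> \<eta> ` X"
      proof (cases "c = \<eta> a")
        case False
        then obtain a' where "a' \<in> X" "nbrs E a' = {c}"
          using homogeneous_bip_exchange[OF hom finite_Y assms(1), of "\<eta> a" c]
            N[OF assms(1)] \<open>c \<in> Y\<close> by auto
        then show ?thesis using N by (metis image_eqI singleton_inject)
      qed (use assms(1) in blast)
    qed
  qed
  moreover have "\<forall>b\<in>X. \<forall>c\<in>Y. E b c \<longleftrightarrow> c = \<eta> b"
    using N by (auto simp: nbrs_def)
  ultimately show ?thesis unfolding perfect_matching_bip_def bij_betw_def by blast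
qed

lemma homogeneous_bip_co_perfect_matching:
  assumes "a \<in> X" "0 < card (nbrs E a)" "card (nbrs E a) = card Y - 1"
  shows "co_perfect_matching_bip X Y E"
proof -
  define \<eta> where "\<eta> b = the_elem (Y - nbrs E b)" for b
  have "Y - nbrs E b = {\<eta> b}" if "b \<in> X" for b
  proof -
    have "card (Y - nbrs E b) = 1"
      using homogeneous_bip_card_nbrs[OF hom assms(1) that] assms(2,3)
        nbrs_subset_Y[OF that] finite_nbrs[OF that] by (simp add: card_Diff_subset)
    then obtain c where "Y - nbrs E b = {c}" by (auto simp: card_1_singleton_iff)
    then show ?thesis by (simp add: \<eta>_def)
  qed
  then have N: "nbrs E b = Y - {\<eta> b}" "\<eta> b \<in> Y" if "b \<in> X" for b
    using nbrs_subset_Y[OF that] that by auto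
  have "inj_on \<eta> X"
    using homogeneous_bip_inj_on_nbrs[OF assms(1,2)] assms(2,3) N by (auto simp: inj_on_def)
  moreover have "\<eta> ` X = Y"
  proof
    show "\<eta> ` X \<subseteq> Y" using N by blast
    show "Y \<subseteq> \<eta> ` X"
    proof
      fix c assume "c \<in> Y"
      show "c \<in> \<eta> ` X"
      proof (cases "c = \<eta> a")
        case False
        then obtain a' where "a' \<in> X" "nbrs E a' = insert (\<eta> a) (nbrs E a - {c})"
          using homogeneous_bip_exchange[OF hom finite_Y assms(1), of c "\<eta> a"]
            N[OF assms(1)] \<open>c \<in> Y\<close> by auto
        then have "nbrs E a' = Y - {c}" using N[OF assms(1)] \<open>c \<in> Y\<close> \<open>c \<noteq> \<eta> a\<close> by auto
        then have "\<eta> a' = c" using N[OF \<open>a' \<in> X\<close>] \<open>c \<in> Y\<close> by blast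
        then show ?thesis using \<open>a' \<in> X\<close> by blast
      qed (use assms(1) in blast)
    qed
  qed
  moreover have "\<forall>b\<in>X. \<forall>c\<in>Y. E b c \<longleftrightarrow> c \<noteq> \<eta> b"
    using N by (auto simp: nbrs_def)
  ultimately show ?thesis unfolding co_perfect_matching_bip_def bij_betw_def by blast
qed

theorem homogeneous_bip_classification:
  "null_bip X Y E \<or> complete_bip X Y E \<or> co_perfect_matching_bip X Y E \<or>
    perfect_matching_bip X Y E"
proof (cases "X = {}")
  case True
  then show ?thesis by (simp add: null_bip_def)
next
  case False
  then obtain a where a: "a \<in> X" by blast
  have deg: "card (nbrs E b) = card (nbrs E a)" if "b \<in> X" for b
    using homogeneous_bip_card_nbrs[OF hom a that] .
  consider "card (nbrs E a) = 0" | "card (nbrs E a) = card Y"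
    | "0 < card (nbrs E a)" "card (nbrs E a) < card Y"
    using card_mono[OF finite_Y nbrs_subset_Y[OF a]] by linarith
  then show ?thesis
  proof cases
    case 1
    then have "nbrs E b = {}" if "b \<in> X" for b
      using deg[OF that] finite_nbrs[OF that] by simp
    then have "null_bip X Y E" by (auto simp: null_bip_def nbrs_def)
    then show ?thesis ..
  next
    case 2
    then have "nbrs E b = Y" if "b \<in> X" for b
      using deg[OF that] card_subset_eq[OF finite_Y nbrs_subset_Y[OF that]] by simp
    then have "complete_bip X Y E" by (auto simp: complete_bip_def nbrs_def)
    then show ?thesis by blast
  next
    case 3
    then show ?thesis
      using homogeneous_bip_degree_extreme[OF a 3] homogeneous_bip_perfect_matching[OF a]
        homogeneous_bip_co_perfect_matching[OF a 3(1)] by auto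
  qed
qed

end

lemma conn_homogeneous_bipD:
  assumes "conn_homogeneous_bip V X Y E" "S \<subseteq> V" "T \<subseteq> V" "finite S"
    "connected_on E S" "connected_on E T" "bip_iso X Y E S T f"
  shows "\<exists>g. bip_aut V X Y E g \<and> (\<forall>v\<in>S. g v = f v)"
  using assms unfolding conn_homogeneous_bip_def by blast

lemma bip_graph_induced:
  assumes "bip_graph V X Y E" "A \<subseteq> Y" "B \<subseteq> X"
  shows "bip_graph (A \<union> B) A B (induced E (A \<union> B))"
proof -
  have "A \<inter> B = {}" "\<And>u v. E u v \<Longrightarrow> E v u" using assms by (auto simp: bip_graph_def)
  moreover have "\<not> E u v" if "u \<in> A \<and> v \<in> A \<or> u \<in> B \<and> v \<in> B" for u v
    using that assms(2,3) bip_graph_part_independent[OF assms(1)]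
      bip_graph_part_independent[OF bip_graph_commute[OF assms(1)]] by blast
  ultimately show ?thesis unfolding bip_graph_def induced_def by blast
qed

lemma connected_on_edge_nbrs:
  assumes sym: "\<And>u v. E u v \<Longrightarrow> E v u" and "E x y" and "S \<subseteq> nbrs E x \<union> nbrs E y"
  shows "connected_on E (S \<union> {x, y})"
proof -
  let ?R = "induced E (S \<union> {x, y})"
  have Rxy: "?R x y" "?R y x" using assms(2) sym by (auto simp: induced_def)
  have "?R\<^sup>*\<^sup>* x u \<and> ?R\<^sup>*\<^sup>* u x" if u: "u \<in> S \<union> {x, y}" for u
  proof -
    consider "u = x" | "E x u" | "E y u" using u assms(2,3) by (auto simp: nbrs_def)
    then show ?thesis
    proof cases
      case 2
      then have "?R x u" "?R u x" using u sym by (auto simp: induced_def)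
      then show ?thesis by auto
    next
      case 3
      then have "?R y u" "?R u y" using u sym by (auto simp: induced_def)
      then show ?thesis using Rxy by (meson converse_rtranclp_into_rtranclp r_into_rtranclp)
    qed simp
  qed
  then show ?thesis unfolding connected_on_def by (blast intro: rtranclp_trans)
qed

lemma bip_iso_extend_fixing_edge:
  assumes bg: "bip_graph V X Y E" and "x \<in> X" "y \<in> Y" "E x y"
    and A: "A = nbrs E x - {y}" and B: "B = nbrs E y - {x}"
    and "S \<subseteq> A \<union> B" "T \<subseteq> A \<union> B" and iso: "bip_iso A B (induced E (A \<union> B)) S T f"
  shows "bip_iso X Y E (S \<union> {x, y}) (T \<union> {x, y}) (f(x := x, y := y))"
proof -
  let ?f = "f(x := x, y := y)"
  have sym: "\<And>u v. E u v \<Longrightarrow> E v u" and XY: "X \<inter> Y = {}" using bg by (auto simp: bip_graph_def)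
  have AY: "A \<subseteq> Y" and BX: "B \<subseteq> X"
    using A B bip_graph_nbrs_subset[OF bg \<open>x \<in> X\<close>] bip_graph_nbrs_subset[OF bip_graph_commute[OF bg] \<open>y \<in> Y\<close>]
    by auto
  have xy: "x \<notin> A \<union> B" "y \<notin> A \<union> B" "x \<noteq> y" using AY BX XY A B \<open>x \<in> X\<close> \<open>y \<in> Y\<close> by auto
  have adj: "E u x \<longleftrightarrow> u \<in> A" "E u y \<longleftrightarrow> u \<in> B" if "u \<in> A \<union> B" for u
    using that A B AY BX sym \<open>x \<in> X\<close> \<open>y \<in> Y\<close> bip_graph_part_independent[OF bg]
      bip_graph_part_independent[OF bip_graph_commute[OF bg]] by (auto simp: nbrs_def)
  have bij: "bij_betw f S T" and fA: "f ` (S \<inter> A) \<subseteq> A" and fB: "f ` (S \<inter> B) \<subseteq> B"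
    using iso by (auto simp: bip_iso_def)
  have fE: "E u v \<longleftrightarrow> E (f u) (f v)" if "u \<in> S" "v \<in> S" for u v
  proof -
    have "f u \<in> T" "f v \<in> T" using bij that by (auto simp: bij_betw_def)
    then have "u \<in> A \<union> B" "v \<in> A \<union> B" "f u \<in> A \<union> B" "f v \<in> A \<union> B"
      using that \<open>S \<subseteq> A \<union> B\<close> \<open>T \<subseteq> A \<union> B\<close> by auto
    then show ?thesis using iso that by (auto simp: bip_iso_def induced_def)
  qed
  have fS: "f u \<in> A \<union> B" "f u \<in> A \<longleftrightarrow> u \<in> A" "f u \<in> B \<longleftrightarrow> u \<in> B" if "u \<in> S" for u
    using that fA fB \<open>S \<subseteq> A \<union> B\<close> AY BX XY by blast+
  have f_S: "?f u = f u" if "u \<in> S" for u using that xy \<open>S \<subseteq> A \<union> B\<close> by auto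
  have "bij_betw ?f S T \<longleftrightarrow> bij_betw f S T" by (rule bij_betw_cong) (rule f_S)
  then have "bij_betw ?f S T" using bij by simp
  moreover have "bij_betw ?f {x, y} {x, y}" using xy by (auto simp: bij_betw_def)
  ultimately have "bij_betw ?f (S \<union> {x, y}) (T \<union> {x, y})"
    using xy \<open>T \<subseteq> A \<union> B\<close> by (blast intro: bij_betw_combine)
  moreover have "E u v \<longleftrightarrow> E (?f u) (?f v)" if uv: "u \<in> S \<union> {x, y}" "v \<in> S \<union> {x, y}" for u v
  proof -
    have E_f: "E w z \<longleftrightarrow> E (?f w) (?f z)" if w: "w \<in> S" and z: "z \<in> S \<union> {x, y}" for w z
    proof (cases "z \<in> S")
      case True
      then show ?thesis using fE[OF w] f_S w by simp
    next
      case False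
      then have "z = x \<or> z = y" using z by blast
      then show ?thesis
        using adj[of w] adj[of "f w"] fS[OF w] f_S[OF w] w \<open>S \<subseteq> A \<union> B\<close> xy(3) by auto
    qed
    consider "u \<in> S" | "v \<in> S" | "u \<in> {x, y}" "v \<in> {x, y}" using uv by blast
    then show ?thesis
    proof cases
      case 2
      then show ?thesis using E_f[OF 2 uv(1)] sym by blast
    next
      case 3
      then show ?thesis using xy(3) by auto
    qed (use E_f uv in blast)
  qed
  moreover have "?f ` ((S \<union> {x, y}) \<inter> X) \<subseteq> X" "?f ` ((S \<union> {x, y}) \<inter> Y) \<subseteq> Y"
    using f_S fS \<open>S \<subseteq> A \<union> B\<close> AY BX XY xy \<open>x \<in> X\<close> \<open>y \<in> Y\<close> by (auto 0 4)
  ultimately show ?thesis unfolding bip_iso_def by blast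
qed

lemma bip_aut_induced:
  assumes "bip_aut V X Y E g" "A \<union> B \<subseteq> V" "g ` A = A" "g ` B = B"
  shows "bip_aut (A \<union> B) A B (induced E (A \<union> B)) g"
proof -
  have "inj_on g (A \<union> B)" using assms(1,2) by (auto simp: bip_aut_def bij_betw_def intro: inj_on_subset)
  moreover have "g ` (A \<union> B) = A \<union> B" using assms(3,4) by (simp add: image_Un)
  moreover have "E u v \<longleftrightarrow> E (g u) (g v)" if "u \<in> A \<union> B" "v \<in> A \<union> B" for u v
  proof -
    have "u \<in> V" "v \<in> V" using that assms(2) by auto
    then show ?thesis using assms(1) by (simp add: bip_aut_def)
  qed
  ultimately show ?thesis using assms(3,4) by (auto simp: bip_aut_def bij_betw_def induced_def)
qed

lemma bip_aut_nbrs_Diff_fixed: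
  assumes "bip_graph V X Y E" "bip_aut V X Y E g" "x \<in> V" "y \<in> V" "g x = x" "g y = y"
  shows "g ` (nbrs E x - {y}) = nbrs E x - {y}"
proof -
  have "inj_on g V" using assms(2) by (simp add: bip_aut_def bij_betw_def)
  moreover have "nbrs E x \<subseteq> V" using assms(1) by (auto simp: bip_graph_def nbrs_def)
  ultimately have "g ` (nbrs E x - {y}) = g ` nbrs E x - {g y}"
    using inj_on_image_set_diff[of g V "nbrs E x" "{y}"] assms(4) by auto
  then show ?thesis using bip_aut_nbrs[OF assms(1-3)] assms(5,6) by simp
qed

lemma conn_homogeneous_bip_local_homogeneous:
  assumes ch: "conn_homogeneous_bip V X Y E" and "x \<in> X" "y \<in> Y" "E x y"
  defines "A \<equiv> nbrs E x - {y}" and "B \<equiv> nbrs E y - {x}"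
  shows "homogeneous_bip (A \<union> B) A B (induced E (A \<union> B))"
  unfolding homogeneous_bip_def
proof (intro conjI allI impI)
  have bg: "bip_graph V X Y E" using ch by (simp add: conn_homogeneous_bip_def)
  have sym: "\<And>u v. E u v \<Longrightarrow> E v u" and inV: "\<And>u v. E u v \<Longrightarrow> u \<in> V \<and> v \<in> V"
    using bg by (auto simp: bip_graph_def)
  have AY: "A \<subseteq> Y" and BX: "B \<subseteq> X"
    using bip_graph_nbrs_subset[OF bg \<open>x \<in> X\<close>] bip_graph_nbrs_subset[OF bip_graph_commute[OF bg] \<open>y \<in> Y\<close>]
    by (auto simp: A_def B_def)
  show "bip_graph (A \<union> B) A B (induced E (A \<union> B))" using bip_graph_induced[OF bg AY BX] .
  fix S T f
  assume "S \<subseteq> A \<union> B \<and> T \<subseteq> A \<union> B \<and> finite S \<and> bip_iso A B (induced E (A \<union> B)) S T f"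
  then have S: "S \<subseteq> A \<union> B" and T: "T \<subseteq> A \<union> B" and "finite S"
    and iso: "bip_iso A B (induced E (A \<union> B)) S T f" by auto
  have "x \<notin> S" "y \<notin> S"
    using S AY BX bg \<open>x \<in> X\<close> \<open>y \<in> Y\<close> by (auto simp: A_def B_def bip_graph_def)
  let ?f = "f(x := x, y := y)"
  have xyV: "x \<in> V" "y \<in> V" using inV \<open>E x y\<close> by auto
  have ABV: "A \<union> B \<subseteq> V" using inV by (auto simp: A_def B_def nbrs_def)
  have AB_nbrs: "A \<union> B \<subseteq> nbrs E x \<union> nbrs E y" by (auto simp: A_def B_def)
  have iso': "bip_iso X Y E (S \<union> {x, y}) (T \<union> {x, y}) ?f"
    using bip_iso_extend_fixing_edge[OF bg \<open>x \<in> X\<close> \<open>y \<in> Y\<close> \<open>E x y\<close>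
        A_def[THEN meta_eq_to_obj_eq] B_def[THEN meta_eq_to_obj_eq] S T iso] .
  have conn: "connected_on E (S \<union> {x, y})" "connected_on E (T \<union> {x, y})"
    using subset_trans[OF S AB_nbrs] subset_trans[OF T AB_nbrs]
    by (simp_all only: connected_on_edge_nbrs[of E x y, OF sym \<open>E x y\<close>])
  have sub: "S \<union> {x, y} \<subseteq> V" "T \<union> {x, y} \<subseteq> V" and fin: "finite (S \<union> {x, y})"
    using S T ABV xyV \<open>finite S\<close> by auto
  obtain g where g: "bip_aut V X Y E g" "\<forall>v\<in>S \<union> {x, y}. g v = ?f v"
    using conn_homogeneous_bipD[OF ch sub fin conn iso'] by blast
  have "g x = x" "g y = y" using g(2) by auto
  then have "g ` A = A" "g ` B = B"
    using bip_aut_nbrs_Diff_fixed[OF bg g(1)] xyV by (simp_all add: A_def B_def)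
  then have "bip_aut (A \<union> B) A B (induced E (A \<union> B)) g"
    using bip_aut_induced[OF g(1) ABV] by simp
  moreover have "\<forall>v\<in>S. g v = f v" using g(2) \<open>x \<notin> S\<close> \<open>y \<notin> S\<close> by auto
  ultimately show "\<exists>g. bip_aut (A \<union> B) A B (induced E (A \<union> B)) g \<and> (\<forall>v\<in>S. g v = f v)"
    by blast
qed

theorem lemma4p5:
  fixes V X Y :: "'a set" and E :: "'a \<Rightarrow> 'a \<Rightarrow> bool" and x y :: 'a
  assumes "conn_homogeneous_bip V X Y E"
    and "connected_on E V"
    and "locally_finite V E"
    and "x \<in> X" and "y \<in> Y" and "E x y"
  defines "A \<equiv> nbrs E x - {y}" and "B \<equiv> nbrs E y - {x}"
  shows "finite (A \<union> B) \<and> homogeneous_bip (A \<union> B) A B (induced E (A \<union> B)) \<and>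
    (null_bip A B (induced E (A \<union> B)) \<or> complete_bip A B (induced E (A \<union> B)) \<or>
     co_perfect_matching_bip A B (induced E (A \<union> B)) \<or>
     perfect_matching_bip A B (induced E (A \<union> B)))"
proof -
  have "x \<in> V" "y \<in> V"
    using assms(1,6) by (auto simp: conn_homogeneous_bip_def bip_graph_def)
  then have fin: "finite (A \<union> B)"
    using assms(3) by (simp add: locally_finite_def A_def B_def)
  have hom: "homogeneous_bip (A \<union> B) A B (induced E (A \<union> B))"
    using conn_homogeneous_bip_local_homogeneous[OF assms(1,4-6)] by (simp add: A_def B_def)
  moreover have "finite B" using fin by simp
  ultimately show ?thesis using fin homogeneous_bip_classification by blast
qed

end
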